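(* For each integer $r\ge1$, let $G_r=(K_2\cup(2r+1)K_1)\nabla(2r+1)K_1$ and $G'_r=(2r+1)K_1\nabla(2r+2)K_1\nabla K_1$, both of order $4r+4$. Then $LE(G_r)=LE(G'_r)=LE(K_{4r+4})=8r+6$ (both are $L$-borderenergetic), and neither $G_r$ nor $G'_r$ has the same Laplacian spectrum as $K_{4r+4}$.
   Context: All graphs are finite, simple and undirected. The Laplacian matrix of $G$ is $L(G)=D-A$ ($D$ degree matrix, $A$ adjacency matrix). For a graph $G$ on $n$ vertices with Laplacian eigenvalues $\mu_1,\dots,\mu_n$ and average degree $\overline d = 2|E(G)|/n$, the Laplacian energy is $LE(G)=\sum_{i=1}^n|\mu_i-\overline d|$. One has $LE(K_n)=2n-2$. A graph $G$ on $n$ vertices is $L$-borderenergetic if $LE(G)=LE(K_n)$. $K_m$ is the complete graph on $m$ vertices, $mG$ is the disjoint union of $m$ copies of $G$, $\cup$ is disjoint union, and the join $G_1\nabla G_2$ is obtained from $G_1\cup G_2$ by adding all edges between a vertex of $G_1$ and a vertex of $G_2$ (the join is associative). *)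

theory Defs
  imports "Jordan_Normal_Form.Char_Poly"
begin

text \<open>A finite simple graph is represented by its gorder n and an adjacency
  predicate on the vertex set {0..<n}; only pairs i, j < n with i \<noteq> j matter.\<close>

type_synonym graph = "nat \<times> (nat \<Rightarrow> nat \<Rightarrow> bool)"

definition gorder :: "graph \<Rightarrow> nat" where "gorder G = fst G"

definition adj :: "graph \<Rightarrow> nat \<Rightarrow> nat \<Rightarrow> bool" where
  "adj G i j \<longleftrightarrow> i < fst G \<and> j < fst G \<and> i \<noteq> j \<and> snd G i j"

definition complete :: "nat \<Rightarrow> graph" where
  "complete m = (m, \<lambda>i j. i \<noteq> j)"

definition empty_graph :: "nat \<Rightarrow> graph" where
  "empty_graph m = (m, \<lambda>i j. False)"

definition disj_union :: "graph \<Rightarrow> graph \<Rightarrow> graph" where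
  "disj_union G H = (gorder G + gorder H, \<lambda>i j.
     if i < gorder G \<and> j < gorder G then adj G i j
     else if gorder G \<le> i \<and> gorder G \<le> j then adj H (i - gorder G) (j - gorder G)
     else False)"

definition join :: "graph \<Rightarrow> graph \<Rightarrow> graph" where
  "join G H = (gorder G + gorder H, \<lambda>i j.
     if i < gorder G \<and> j < gorder G then adj G i j
     else if gorder G \<le> i \<and> gorder G \<le> j then adj H (i - gorder G) (j - gorder G)
     else True)"

definition degree :: "graph \<Rightarrow> nat \<Rightarrow> nat" where
  "degree G i = card {j. j < gorder G \<and> adj G i j}"

definition num_edges :: "graph \<Rightarrow> nat" where
  "num_edges G = card {(i, j). i < j \<and> j < gorder G \<and> adj G i j}"

definition laplacian :: "graph \<Rightarrow> real mat" where
  "laplacian G = mat (gorder G) (gorder G) (\<lambda>(i, j).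
     (if i = j then real (degree G i) else 0) - (if adj G i j then 1 else 0))"

text \<open>Laplacian spectrum as a multiset: roots of the characteristic polynomial,
  with multiplicity (L is real symmetric, so its characteristic polynomial splits over the reals).\<close>
definition lap_spectrum :: "graph \<Rightarrow> real multiset" where
  "lap_spectrum G = proots (char_poly (laplacian G))"

definition avg_degree :: "graph \<Rightarrow> real" where
  "avg_degree G = 2 * real (num_edges G) / real (gorder G)"

definition lap_energy :: "graph \<Rightarrow> real" where
  "lap_energy G = (\<Sum>\<mu>\<in>#lap_spectrum G. \<bar>\<mu> - avg_degree G\<bar>)"

definition L_borderenergetic :: "graph \<Rightarrow> bool" where
  "L_borderenergetic G \<longleftrightarrow> lap_energy G = lap_energy (complete (gorder G))"

definition G_r :: "nat \<Rightarrow> graph" where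
  "G_r r = join (disj_union (complete 2) (empty_graph (2*r+1))) (empty_graph (2*r+1))"

definition G'_r :: "nat \<Rightarrow> graph" where
  "G'_r r = join (join (empty_graph (2*r+1)) (empty_graph (2*r+2))) (complete 1)"

end

theory Submission
  imports Defs
begin

text \<open>
  The vertices of \<open>G\<^sub>r\<close>, of \<open>G'\<^sub>r\<close> and of \<open>K\<^sub>n\<close> fall into classes of twins, i.e. vertices whose
  Laplacian rows agree outside the two twin positions.  For twins \<open>i, j\<close>, subtracting row \<open>j\<close>
  from row \<open>i\<close> of \<open>x I - L\<close> and then adding column \<open>i\<close> to column \<open>j\<close> leaves \<open>x - \<lambda>\<close> as the
  only nonzero entry of row \<open>i\<close>.  So the characteristic polynomial splits off \<open>x - \<lambda>\<close>, and the
  other factor belongs to a matrix in which \<open>j\<close> carries the weight of both vertices.  Collapsing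
  every class to one vertex leaves a weighted quotient matrix (of size \<open>3 \<times> 3\<close> for \<open>G\<^sub>r\<close> and
  \<open>G'\<^sub>r\<close>) whose characteristic polynomial is computed directly.  The Laplacian spectrum of \<open>G\<^sub>r\<close>
  is \<open>0, 4r+4\<close> together with \<open>2r+1\<close> and \<open>2r+3\<close>, each with multiplicity \<open>2r+1\<close>.  The spectrum
  of \<open>G'\<^sub>r\<close> is \<open>0, 4r+4, 4r+4\<close> together with \<open>2r+2\<close> with multiplicity \<open>2r+1\<close> and \<open>2r+3\<close>
  with multiplicity \<open>2r\<close>.  The average degrees are \<open>2r+2\<close> and \<open>2r+3 - 1/(2r+2)\<close>, and in both
  cases the deviations from them add up to \<open>8r+6\<close>.
\<close>

lemma char_poly_matrix_dim [simp]:
  "dim_row (char_poly_matrix A) = dim_row A" "dim_col (char_poly_matrix A) = dim_col A"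
  unfolding char_poly_matrix_def by simp_all

lemma char_poly_matrix_index:
  assumes "A \<in> carrier_mat n n" "i < n" "j < n"
  shows "char_poly_matrix A $$ (i, j) = (if i = j then [:0, 1:] else 0) + [:- A $$ (i, j):]"
  using assms unfolding char_poly_matrix_def by auto

lemma mat_delete_index_insert_index:
  assumes "A \<in> carrier_mat n n" "i < n - 1" "j < n - 1"
  shows "mat_delete A k l $$ (i, j) = A $$ (insert_index k i, insert_index l j)"
  using assms unfolding mat_delete_def insert_index_def by auto

lemma mat_delete_char_poly_matrix:
  assumes "A \<in> carrier_mat n n"
  shows "mat_delete (char_poly_matrix A) k k = char_poly_matrix (mat_delete A k k)"
proof (rule eq_matI)
  fix i j assume "i < dim_row (char_poly_matrix (mat_delete A k k))"
    "j < dim_col (char_poly_matrix (mat_delete A k k))"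
  then have "i < n - 1" "j < n - 1"
    using assms by auto
  then show "mat_delete (char_poly_matrix A) k k $$ (i, j) = char_poly_matrix (mat_delete A k k) $$ (i, j)"
    using mat_delete_carrier[OF assms, of k k]
    by (auto simp: mat_delete_index_insert_index[OF char_poly_matrix_closed[OF assms]]
        mat_delete_index_insert_index[OF assms] char_poly_matrix_index[OF assms]
        char_poly_matrix_index[where n = "n - 1"] insert_index_def)
qed (use assms in \<open>auto simp: char_poly_matrix_def\<close>)

lemma char_poly_twin_factor:
  fixes A :: "'a :: comm_ring_1 mat"
  assumes A: "A \<in> carrier_mat n n" and i: "i < n" and j: "j < n" and "i \<noteq> j"
    and twin_rows: "\<And>k. k < n \<Longrightarrow> k \<noteq> i \<Longrightarrow> k \<noteq> j \<Longrightarrow> A $$ (i, k) = A $$ (j, k)"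
    and "A $$ (i, i) - A $$ (j, i) = c" and "A $$ (j, j) - A $$ (i, j) = c"
  shows "char_poly A = [:- c, 1:] * char_poly (mat_delete (addcol 1 j i A) i i)"
proof -
  let ?C = "char_poly_matrix A"
  let ?R = "addrow (- 1) i j ?C"
  let ?D = "addcol 1 j i ?R"
  have C: "?C \<in> carrier_mat n n" and R: "?R \<in> carrier_mat n n"
    using A by simp_all
  have D: "?D \<in> carrier_mat n n" and A': "addcol 1 j i A \<in> carrier_mat n n"
    using carrier_matD[OF A] carrier_matD[OF R] by (auto intro!: carrier_matI)
  have row_i: "?D $$ (i, k) = (if k = i then [:- c, 1:] else 0)" if "k < n" for k
    using that A i j \<open>i \<noteq> j\<close> twin_rows[of k] assms(6,7)
    by (auto simp: char_poly_matrix_index carrier_matD[OF C])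
  have "mat_delete ?D i i = mat_delete (char_poly_matrix (addcol 1 j i A)) i i"
  proof (rule eq_matI)
    fix a b assume "a < dim_row (mat_delete (char_poly_matrix (addcol 1 j i A)) i i)"
      "b < dim_col (mat_delete (char_poly_matrix (addcol 1 j i A)) i i)"
    then have "a < n - 1" "b < n - 1" and "insert_index i a < n" "insert_index i b < n"
      and "i \<noteq> insert_index i a" "i \<noteq> insert_index i b"
      using A' i by (auto simp: insert_index_def)
    then show "mat_delete ?D i i $$ (a, b) = mat_delete (char_poly_matrix (addcol 1 j i A)) i i $$ (a, b)"
      using A A' i j
      by (simp add: mat_delete_index_insert_index[OF D] mat_delete_index_insert_index[OF char_poly_matrix_closed[OF A']]
            char_poly_matrix_index carrier_matD[OF C] carrier_matD[OF A'])
  qed (use A' D in auto)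
  then have cofactor: "cofactor ?D i i = char_poly (mat_delete (addcol 1 j i A) i i)"
    unfolding cofactor_def char_poly_def by (simp add: mat_delete_char_poly_matrix[OF A'])
  have "char_poly A = det ?R"
    unfolding char_poly_def using det_addrow[OF j \<open>i \<noteq> j\<close> C] by simp
  also have "\<dots> = det ?D"
    using det_addcol[OF i _ R] \<open>i \<noteq> j\<close> by simp
  also have "\<dots> = (\<Sum>k<n. ?D $$ (i, k) * cofactor ?D i k)"
    by (rule laplace_expansion_row[OF D i])
  also have "\<dots> = (\<Sum>k<n. if k = i then [:- c, 1:] * cofactor ?D i i else 0)"
    by (rule sum.cong) (simp_all add: row_i)
  also have "\<dots> = [:- c, 1:] * cofactor ?D i i"
    using i by simp
  finally show ?thesis
    unfolding cofactor .
qed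

lemma det_2x2:
  assumes A: "A \<in> carrier_mat 2 2"
  shows "det A = A $$ (0, 0) * A $$ (1, 1) - A $$ (0, 1) * A $$ (1, 0)"
proof -
  have minor: "mat_delete A 0 k \<in> carrier_mat 1 1" for k
    using mat_delete_carrier[OF A] by simp
  have "det A = (\<Sum>k<2. A $$ (0, k) * cofactor A 0 k)"
    by (rule laplace_expansion_row[OF A]) simp
  also have "\<dots> = A $$ (0, 0) * cofactor A 0 0 + A $$ (0, 1) * cofactor A 0 1"
    by (simp add: numeral_2_eq_2)
  also have "cofactor A 0 0 = A $$ (1, 1)"
    unfolding cofactor_def det_single[OF minor] using A by (simp add: mat_delete_def)
  also have "cofactor A 0 1 = - A $$ (1, 0)"
    unfolding cofactor_def det_single[OF minor] using A by (simp add: mat_delete_def)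
  finally show ?thesis
    by simp
qed

lemma det_3x3:
  assumes A: "A \<in> carrier_mat 3 3"
  shows "det A = A $$ (0, 0) * (A $$ (1, 1) * A $$ (2, 2) - A $$ (1, 2) * A $$ (2, 1))
    - A $$ (0, 1) * (A $$ (1, 0) * A $$ (2, 2) - A $$ (1, 2) * A $$ (2, 0))
    + A $$ (0, 2) * (A $$ (1, 0) * A $$ (2, 1) - A $$ (1, 1) * A $$ (2, 0))"
proof -
  have minor: "mat_delete A 0 k \<in> carrier_mat 2 2" for k
    using mat_delete_carrier[OF A] by simp
  have "det A = (\<Sum>k<3. A $$ (0, k) * cofactor A 0 k)"
    by (rule laplace_expansion_row[OF A]) simp
  also have "\<dots> = A $$ (0, 0) * cofactor A 0 0 + A $$ (0, 1) * cofactor A 0 1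
      + A $$ (0, 2) * cofactor A 0 2"
    by (simp add: numeral_3_eq_3 numeral_2_eq_2)
  also have "cofactor A 0 0 = A $$ (1, 1) * A $$ (2, 2) - A $$ (1, 2) * A $$ (2, 1)"
    unfolding cofactor_def det_2x2[OF minor] using A by (simp add: mat_delete_def numeral_2_eq_2)
  also have "cofactor A 0 1 = - (A $$ (1, 0) * A $$ (2, 2) - A $$ (1, 2) * A $$ (2, 0))"
    unfolding cofactor_def det_2x2[OF minor] using A by (simp add: mat_delete_def numeral_2_eq_2)
  also have "cofactor A 0 2 = A $$ (1, 0) * A $$ (2, 1) - A $$ (1, 1) * A $$ (2, 0)"
    unfolding cofactor_def det_2x2[OF minor] using A by (simp add: mat_delete_def numeral_2_eq_2)
  finally show ?thesis
    by (simp add: algebra_simps)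
qed

lemma char_poly_1x1:
  assumes "A \<in> carrier_mat 1 1"
  shows "char_poly A = [:- A $$ (0, 0), 1:]"
  using assms unfolding char_poly_def
  by (simp add: det_single[OF char_poly_matrix_closed[OF assms]] char_poly_matrix_index)

lemma poly_char_poly_3x3:
  fixes A :: "'a :: field mat"
  assumes A: "A \<in> carrier_mat 3 3"
  shows "poly (char_poly A) x =
      (x - A $$ (0, 0)) * ((x - A $$ (1, 1)) * (x - A $$ (2, 2)) - A $$ (1, 2) * A $$ (2, 1))
    - A $$ (0, 1) * (A $$ (1, 0) * (x - A $$ (2, 2)) + A $$ (1, 2) * A $$ (2, 0))
    - A $$ (0, 2) * (A $$ (1, 0) * A $$ (2, 1) + (x - A $$ (1, 1)) * A $$ (2, 0))"
proof -
  have "- char_matrix A x \<in> carrier_mat 3 3"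
    using A by simp
  then show ?thesis
    using A unfolding char_poly_matrix[OF A]
    by (simp add: det_3x3 char_matrix_def algebra_simps)
qed

text \<open>
  Vertex \<open>i\<close> of a class matrix belongs to the class \<open>cl i\<close>, and all vertices of a class are
  twins: each pair of twins of class \<open>c\<close> splits off the eigenvalue \<open>d c\<close>.  The column weight
  \<open>w j\<close> counts the vertices that \<open>j\<close> stands for once twins are merged.
\<close>

definition class_mat ::
    "nat \<Rightarrow> (nat \<Rightarrow> nat) \<Rightarrow> (nat \<Rightarrow> 'a) \<Rightarrow> (nat \<Rightarrow> nat \<Rightarrow> 'a) \<Rightarrow> (nat \<Rightarrow> 'a) \<Rightarrow> 'a :: comm_ring_1 mat"
  where "class_mat n cl d B w = mat n n (\<lambda>(i, j). (if i = j then d (cl i) else 0) + w j * B (cl i) (cl j))"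

lemma class_mat_carrier: "class_mat n cl d B w \<in> carrier_mat n n"
  unfolding class_mat_def by simp

lemma class_mat_dim [simp]:
  "dim_row (class_mat n cl d B w) = n" "dim_col (class_mat n cl d B w) = n"
  unfolding class_mat_def by simp_all

lemma class_mat_index:
  "i < n \<Longrightarrow> j < n \<Longrightarrow>
    class_mat n cl d B w $$ (i, j) = (if i = j then d (cl i) else 0) + w j * B (cl i) (cl j)"
  unfolding class_mat_def by simp

lemma class_mat_cong:
  "(\<And>t. t < n \<Longrightarrow> cl t = cl' t) \<Longrightarrow> (\<And>t. t < n \<Longrightarrow> w t = w' t) \<Longrightarrow>
    class_mat n cl d B w = class_mat n cl' d B w'"
  by (rule eq_matI) (auto simp: class_mat_index)

lemma char_poly_class_mat_merge_twins:
  assumes i: "i < n" and j: "j < n" and "i \<noteq> j" and "cl i = cl j"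
  shows "char_poly (class_mat n cl d B w) = [:- d (cl i), 1:] *
    char_poly (class_mat (n - 1) (cl \<circ> insert_index i) d B ((w(j := w j + w i)) \<circ> insert_index i))"
proof -
  let ?A = "class_mat n cl d B w"
  let ?M = "class_mat (n - 1) (cl \<circ> insert_index i) d B ((w(j := w j + w i)) \<circ> insert_index i)"
  have A': "addcol 1 j i ?A \<in> carrier_mat n n"
    by (intro carrier_matI) simp_all
  have "mat_delete (addcol 1 j i ?A) i i = ?M"
  proof (rule eq_matI)
    fix a b assume "a < dim_row ?M" "b < dim_col ?M"
    then have "a < n - 1" "b < n - 1" and "insert_index i a < n" "insert_index i b < n"
      and "i \<noteq> insert_index i a" "i \<noteq> insert_index i b"
      and "(insert_index i a = insert_index i b) = (a = b)"
      using i by (auto simp: insert_index_def)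
    then show "mat_delete (addcol 1 j i ?A) i i $$ (a, b) = ?M $$ (a, b)"
      using i j \<open>cl i = cl j\<close>
      by (auto simp: mat_delete_index_insert_index[OF A'] class_mat_index algebra_simps)
  qed simp_all
  moreover have "char_poly ?A = [:- d (cl i), 1:] * char_poly (mat_delete (addcol 1 j i ?A) i i)"
    by (rule char_poly_twin_factor[OF class_mat_carrier i j \<open>i \<noteq> j\<close>])
      (use i j \<open>i \<noteq> j\<close> \<open>cl i = cl j\<close> in \<open>auto simp: class_mat_index\<close>)
  ultimately show ?thesis
    by simp
qed

text \<open>
  Merges the run of twins \<open>a, \<dots>, a + k\<close> into \<open>a\<close>.  The result is described pointwise by
  \<open>n'\<close>, \<open>cl'\<close>, \<open>w'\<close> and \<open>c\<close>, so that the lemma applies to any presentation of it.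
\<close>

lemma char_poly_class_mat_collapse:
  assumes "n = n' + k" and "a < n'"
    and "\<And>t. a \<le> t \<Longrightarrow> t \<le> a + k \<Longrightarrow> cl t = cl a"
    and "\<And>t. a < t \<Longrightarrow> t \<le> a + k \<Longrightarrow> w t = 1"
    and "\<And>t. t < n' \<Longrightarrow> cl' t = cl (if t \<le> a then t else t + k)"
    and "\<And>t. t < n' \<Longrightarrow> w' t = (if t = a then w a + of_nat k else w (if t \<le> a then t else t + k))"
    and "d (cl a) = c"
  shows "char_poly (class_mat n cl d B w) = [:- c, 1:] ^ k * char_poly (class_mat n' cl' d B w')"
  using assms
proof (induction k arbitrary: n cl w)
  case 0
  have "class_mat n' cl d B w = class_mat n' cl' d B w'"
    by (rule class_mat_cong) (simp_all add: 0)
  then show ?case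
    using 0 by simp
next
  case (Suc k)
  note same_class = Suc.prems(3) and unit_weight = Suc.prems(4)
  let ?cl = "cl \<circ> insert_index (Suc a)"
  let ?w = "(w(a := w a + w (Suc a))) \<circ> insert_index (Suc a)"
  have "cl (Suc a) = cl a"
    using same_class[of "Suc a"] by simp
  then have "char_poly (class_mat n cl d B w) = [:- c, 1:] * char_poly (class_mat (n - 1) ?cl d B ?w)"
    using char_poly_class_mat_merge_twins[of "Suc a" n a cl d B w] Suc.prems(1,2,7) by simp
  also have "char_poly (class_mat (n - 1) ?cl d B ?w) = [:- c, 1:] ^ k * char_poly (class_mat n' cl' d B w')"
  proof (rule Suc.IH)
    show "?cl t = ?cl a" if "a \<le> t" "t \<le> a + k" for t
      using that same_class[of t] same_class[of "Suc t"] by (simp add: insert_index_def)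
    show "?w t = 1" if "a < t" "t \<le> a + k" for t
      using that unit_weight[of "Suc t"] by (simp add: insert_index_def)
    show "cl' t = ?cl (if t \<le> a then t else t + k)" if "t < n'" for t
      using that Suc.prems(5)[of t] by (simp add: insert_index_def)
    show "w' t = (if t = a then ?w a + of_nat k else ?w (if t \<le> a then t else t + k))" if "t < n'" for t
      using that unit_weight[of "Suc a"] Suc.prems(6)[of t] by (simp add: insert_index_def)
    show "d (?cl a) = c"
      using Suc.prems(7) by simp
  qed (use Suc.prems(1,2) in simp_all)
  finally show ?case
    by (simp only: power_Suc mult.assoc)
qed

lemma laplacian_eq_class_mat:
  assumes "gorder G = n"
    and "\<And>i j. i < n \<Longrightarrow> j < n \<Longrightarrow> i \<noteq> j \<Longrightarrow> B (cl i) (cl j) = (if adj G i j then -1 else 0)"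
    and "\<And>i. i < n \<Longrightarrow> real (degree G i) = d (cl i) + B (cl i) (cl i)"
  shows "laplacian G = class_mat n cl d B (\<lambda>_. 1)"
proof (rule eq_matI)
  fix i j assume "i < dim_row (class_mat n cl d B (\<lambda>_. 1))" "j < dim_col (class_mat n cl d B (\<lambda>_. 1))"
  then have "i < n" "j < n"
    by simp_all
  moreover have "\<not> adj G i i"
    unfolding adj_def by simp
  ultimately show "laplacian G $$ (i, j) = class_mat n cl d B (\<lambda>_. 1) $$ (i, j)"
    using assms by (cases "i = j") (simp_all add: laplacian_def class_mat_index)
qed (simp_all add: laplacian_def assms(1))

lemma gorder_complete: "gorder (complete m) = m"
  unfolding complete_def gorder_def by simp

lemma adj_complete: "adj (complete m) i j \<longleftrightarrow> i < m \<and> j < m \<and> i \<noteq> j"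
  unfolding complete_def adj_def by auto

lemma degree_complete: "i < m \<Longrightarrow> degree (complete m) i = m - 1"
proof -
  assume "i < m"
  then have "{j. j < gorder (complete m) \<and> adj (complete m) i j} = {..<m} - {i}"
    unfolding gorder_complete adj_complete by auto
  then show ?thesis
    using \<open>i < m\<close> unfolding degree_def by simp
qed

lemma char_poly_laplacian_complete:
  assumes "m \<ge> 1"
  shows "char_poly (laplacian (complete m)) = [:- real m, 1:] ^ (m - 1) * [:0, 1:]"
proof -
  have "laplacian (complete m) = class_mat m (\<lambda>_. 0) (\<lambda>_. real m) (\<lambda>_ _. -1) (\<lambda>_. 1)"
    using assms by (intro laplacian_eq_class_mat) (simp_all add: gorder_complete adj_complete degree_complete)
  also have "char_poly \<dots> = [:- real m, 1:] ^ (m - 1) *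
      char_poly (class_mat 1 (\<lambda>_. 0) (\<lambda>_. real m) (\<lambda>_ _. -1) (\<lambda>_. real m))"
    by (rule char_poly_class_mat_collapse[where a = 0]) (use assms in auto)
  also have "char_poly (class_mat 1 (\<lambda>_. 0) (\<lambda>_. real m) (\<lambda>_ _. -1) (\<lambda>_. real m)) = [:0, 1:]"
    unfolding char_poly_1x1[OF class_mat_carrier] by (simp add: class_mat_index)
  finally show ?thesis .
qed

lemma card_pairs_less: "2 * card {(i, j). i < j \<and> j < m} = m * (m - 1)"
proof (induction m)
  case (Suc m)
  have split: "{(i, j). i < j \<and> j < Suc m} = {(i, j). i < j \<and> j < m} \<union> (\<lambda>i. (i, m)) ` {..<m}"
    by auto
  have "finite {(i, j). i < j \<and> j < m}"
    by (rule finite_subset[of _ "{..<m} \<times> {..<m}"]) auto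
  then have "card {(i, j). i < j \<and> j < Suc m} = card {(i, j). i < j \<and> j < m} + m"
    unfolding split by (subst card_Un_disjoint) (auto simp: card_image inj_on_def)
  with Suc.IH show ?case
    by (cases m) auto
qed simp

lemma avg_degree_complete:
  assumes "m \<ge> 1"
  shows "avg_degree (complete m) = real m - 1"
proof -
  have "{(i, j). i < j \<and> j < gorder (complete m) \<and> adj (complete m) i j} = {(i, j). i < j \<and> j < m}"
    unfolding gorder_complete adj_complete by auto
  then have "2 * num_edges (complete m) = m * (m - 1)"
    unfolding num_edges_def by (simp add: card_pairs_less)
  then have "2 * real (num_edges (complete m)) = real m * (real m - 1)"
    using assms by (metis of_nat_1 of_nat_diff of_nat_mult of_nat_numeral)
  then show ?thesis
    using assms unfolding avg_degree_def gorder_complete by (simp add: field_simps)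
qed

lemma lap_spectrum_complete:
  assumes "m \<ge> 1"
  shows "lap_spectrum (complete m) = add_mset 0 (replicate_mset (m - 1) (real m))"
  unfolding lap_spectrum_def char_poly_laplacian_complete[OF assms]
  by (simp add: proots_mult proots_power del: mult_pCons_right)

lemma lap_energy_complete:
  assumes "m \<ge> 1"
  shows "lap_energy (complete m) = 2 * real m - 2"
  unfolding lap_energy_def lap_spectrum_complete[OF assms] avg_degree_complete[OF assms]
  using assms by (simp add: of_nat_diff algebra_simps)

lemma gorder_G_r: "gorder (G_r r) = 4 * r + 4"
  unfolding G_r_def join_def disj_union_def complete_def empty_graph_def gorder_def by simp

lemma adj_G_r: "adj (G_r r) i j \<longleftrightarrow> i < 4 * r + 4 \<and> j < 4 * r + 4 \<and> i \<noteq> j \<and>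
    (i < 2 \<and> j < 2 \<or> i < 2 * r + 3 \<and> 2 * r + 3 \<le> j \<or> 2 * r + 3 \<le> i \<and> j < 2 * r + 3)"
  unfolding G_r_def join_def disj_union_def complete_def empty_graph_def gorder_def adj_def by auto

text \<open>
  Class 0 is the \<open>K\<^sub>2\<close>, class 1 the \<open>(2r+1)K\<^sub>1\<close> beside it, class 2 the \<open>(2r+1)K\<^sub>1\<close> joined to both.
\<close>

definition G_r_class :: "nat \<Rightarrow> nat \<Rightarrow> nat" where
  "G_r_class r t = (if t < 2 then 0 else if t < 2 * r + 3 then 1 else 2)"

definition G_r_twin_eigenvalue :: "nat \<Rightarrow> nat \<Rightarrow> real" where
  "G_r_twin_eigenvalue r c = (if c = 1 then 2 * r + 1 else 2 * r + 3)"

definition G_r_coupling :: "nat \<Rightarrow> nat \<Rightarrow> real" where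
  "G_r_coupling c c' = (if c = 0 \<and> c' = 0 then -1 else if (c = 2) \<noteq> (c' = 2) then -1 else 0)"

lemma degree_G_r:
  assumes "i < 4 * r + 4"
  shows "real (degree (G_r r) i) =
    G_r_twin_eigenvalue r (G_r_class r i) + G_r_coupling (G_r_class r i) (G_r_class r i)"
proof -
  consider "i < 2" | "2 \<le> i" "i < 2 * r + 3" | "2 * r + 3 \<le> i"
    by linarith
  then show ?thesis
  proof cases
    case 1
    then have "{j. j < gorder (G_r r) \<and> adj (G_r r) i j} = {1 - i} \<union> {2 * r + 3..<4 * r + 4}"
      unfolding gorder_G_r adj_G_r by (auto, arith)
    moreover have "card ({1 - i} \<union> {2 * r + 3..<4 * r + 4}) = 2 * r + 2"
      using 1 by (subst card_Un_disjoint) auto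
    ultimately show ?thesis
      using 1 unfolding degree_def G_r_twin_eigenvalue_def G_r_coupling_def G_r_class_def by simp
  next
    case 2
    then have "{j. j < gorder (G_r r) \<and> adj (G_r r) i j} = {2 * r + 3..<4 * r + 4}"
      unfolding gorder_G_r adj_G_r by auto
    then show ?thesis
      using 2 unfolding degree_def G_r_twin_eigenvalue_def G_r_coupling_def G_r_class_def by simp
  next
    case 3
    then have "{j. j < gorder (G_r r) \<and> adj (G_r r) i j} = {..<2 * r + 3}"
      using assms unfolding gorder_G_r adj_G_r by auto
    then show ?thesis
      using 3 unfolding degree_def G_r_twin_eigenvalue_def G_r_coupling_def G_r_class_def by simp
  qed
qed

lemma laplacian_G_r:
  "laplacian (G_r r) = class_mat (4 * r + 4) (G_r_class r) (G_r_twin_eigenvalue r) G_r_coupling (\<lambda>_. 1)"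
proof (rule laplacian_eq_class_mat[OF gorder_G_r])
  fix i j assume "i < 4 * r + 4" "j < 4 * r + 4" "i \<noteq> j"
  then show "G_r_coupling (G_r_class r i) (G_r_class r j) = (if adj (G_r r) i j then -1 else 0)"
    unfolding adj_G_r G_r_coupling_def G_r_class_def by auto
qed (rule degree_G_r)

lemma char_poly_laplacian_G_r:
  "char_poly (laplacian (G_r r)) = [:0, 1:] * [:- (4 * real r + 4), 1:] *
    [:- (2 * real r + 1), 1:] ^ (2 * r + 1) * [:- (2 * real r + 3), 1:] ^ (2 * r + 1)"
proof -
  let ?d = "G_r_twin_eigenvalue r" and ?B = G_r_coupling
  let ?cl = "\<lambda>t. if t < 1 then 0 else if t < 2 * r + 2 then 1 else 2 :: nat"
  let ?cl' = "\<lambda>t. if t < 1 then 0 else if t < 2 then 1 else 2 :: nat"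
  have "char_poly (laplacian (G_r r)) = [:- (2 * real r + 3), 1:] ^ 1 *
      char_poly (class_mat (4 * r + 3) ?cl ?d ?B (\<lambda>t. if t = 0 then 2 else 1))"
    unfolding laplacian_G_r
    by (rule char_poly_class_mat_collapse[where a = 0]) (auto simp: G_r_class_def G_r_twin_eigenvalue_def)
  also have "char_poly (class_mat (4 * r + 3) ?cl ?d ?B (\<lambda>t. if t = 0 then 2 else 1)) =
      [:- (2 * real r + 1), 1:] ^ (2 * r) *
      char_poly (class_mat (2 * r + 3) ?cl' ?d ?B (\<lambda>t. if t = 0 then 2 else if t = 1 then 2 * r + 1 else 1))"
    by (rule char_poly_class_mat_collapse[where a = 1]) (auto simp: G_r_twin_eigenvalue_def)
  also have "char_poly (class_mat (2 * r + 3) ?cl' ?d ?B (\<lambda>t. if t = 0 then 2 else if t = 1 then 2 * r + 1 else 1)) =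
      [:- (2 * real r + 3), 1:] ^ (2 * r) *
      char_poly (class_mat 3 ?cl' ?d ?B (\<lambda>t. if t = 0 then 2 else 2 * r + 1))"
    by (rule char_poly_class_mat_collapse[where a = 2]) (auto simp: G_r_twin_eigenvalue_def)
  also have "char_poly (class_mat 3 ?cl' ?d ?B (\<lambda>t. if t = 0 then 2 else 2 * r + 1)) =
      [:0, 1:] * [:- (2 * real r + 1), 1:] * [:- (4 * real r + 4), 1:]"
    unfolding poly_eq_poly_eq_iff[symmetric]
    by (rule ext) (simp add: poly_char_poly_3x3[OF class_mat_carrier] class_mat_index
        G_r_twin_eigenvalue_def G_r_coupling_def algebra_simps)
  finally show ?thesis
    by (simp only: power_add power_one_right mult_ac)
qed

lemma avg_degree_G_r: "avg_degree (G_r r) = 2 * real r + 2"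
proof -
  have "{(i, j). i < j \<and> j < gorder (G_r r) \<and> adj (G_r r) i j} =
      {(0, 1)} \<union> {..<2 * r + 3} \<times> {2 * r + 3..<4 * r + 4}"
    unfolding gorder_G_r adj_G_r by auto
  moreover have "card ({(0, 1)} \<union> {..<2 * r + 3} \<times> {2 * r + 3..<4 * r + 4}) = 1 + (2 * r + 3) * (2 * r + 1)"
    by (subst card_Un_disjoint) (auto simp: card_cartesian_product)
  ultimately have "num_edges (G_r r) = 1 + (2 * r + 3) * (2 * r + 1)"
    unfolding num_edges_def by simp
  then show ?thesis
    unfolding avg_degree_def gorder_G_r by (simp add: field_simps)
qed

lemma lap_spectrum_G_r:
  "lap_spectrum (G_r r) = {#0, 4 * real r + 4#} +
    replicate_mset (2 * r + 1) (2 * real r + 1) + replicate_mset (2 * r + 1) (2 * real r + 3)"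
  unfolding lap_spectrum_def char_poly_laplacian_G_r
  by (simp add: proots_mult proots_power del: mult_pCons_left mult_pCons_right) (simp add: ac_simps)

lemma lap_energy_G_r: "lap_energy (G_r r) = 8 * real r + 6"
  unfolding lap_energy_def lap_spectrum_G_r avg_degree_G_r by (simp add: algebra_simps)

lemma gorder_G'_r: "gorder (G'_r r) = 4 * r + 4"
  unfolding G'_r_def join_def complete_def empty_graph_def gorder_def by simp

text \<open>Class 0 is the \<open>(2r+1)K\<^sub>1\<close>, class 1 the \<open>(2r+2)K\<^sub>1\<close>, class 2 the \<open>K\<^sub>1\<close>.\<close>

definition G'_r_class :: "nat \<Rightarrow> nat \<Rightarrow> nat" where
  "G'_r_class r t = (if t < 2 * r + 1 then 0 else if t < 4 * r + 3 then 1 else 2)"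

definition G'_r_twin_eigenvalue :: "nat \<Rightarrow> nat \<Rightarrow> real" where
  "G'_r_twin_eigenvalue r c = (if c = 0 then 2 * r + 3 else if c = 1 then 2 * r + 2 else 4 * r + 3)"

definition G'_r_coupling :: "nat \<Rightarrow> nat \<Rightarrow> real" where
  "G'_r_coupling c c' = (if c = c' then 0 else -1)"

lemma adj_G'_r:
  "adj (G'_r r) i j \<longleftrightarrow> i < 4 * r + 4 \<and> j < 4 * r + 4 \<and> i \<noteq> j \<and> G'_r_class r i \<noteq> G'_r_class r j"
  unfolding G'_r_def join_def complete_def empty_graph_def gorder_def adj_def G'_r_class_def by auto

lemma degree_G'_r:
  assumes "i < 4 * r + 4"
  shows "real (degree (G'_r r) i) =
    G'_r_twin_eigenvalue r (G'_r_class r i) + G'_r_coupling (G'_r_class r i) (G'_r_class r i)"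
proof -
  consider "i < 2 * r + 1" | "2 * r + 1 \<le> i" "i < 4 * r + 3" | "i = 4 * r + 3"
    using assms by linarith
  then show ?thesis
  proof cases
    case 1
    then have "{j. j < gorder (G'_r r) \<and> adj (G'_r r) i j} = {2 * r + 1..<4 * r + 4}"
      unfolding gorder_G'_r adj_G'_r G'_r_class_def by auto
    then show ?thesis
      using 1 unfolding degree_def G'_r_twin_eigenvalue_def G'_r_coupling_def G'_r_class_def by simp
  next
    case 2
    then have "{j. j < gorder (G'_r r) \<and> adj (G'_r r) i j} = {..<2 * r + 1} \<union> {4 * r + 3}"
      unfolding gorder_G'_r adj_G'_r G'_r_class_def by auto
    moreover have "card ({..<2 * r + 1} \<union> {4 * r + 3}) = 2 * r + 2"
      by (subst card_Un_disjoint) auto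
    ultimately show ?thesis
      using 2 unfolding degree_def G'_r_twin_eigenvalue_def G'_r_coupling_def G'_r_class_def by simp
  next
    case 3
    then have "{j. j < gorder (G'_r r) \<and> adj (G'_r r) i j} = {..<4 * r + 3}"
      unfolding gorder_G'_r adj_G'_r G'_r_class_def by auto
    then show ?thesis
      using 3 unfolding degree_def G'_r_twin_eigenvalue_def G'_r_coupling_def G'_r_class_def by simp
  qed
qed

lemma laplacian_G'_r:
  "laplacian (G'_r r) = class_mat (4 * r + 4) (G'_r_class r) (G'_r_twin_eigenvalue r) G'_r_coupling (\<lambda>_. 1)"
proof (rule laplacian_eq_class_mat[OF gorder_G'_r])
  fix i j assume "i < 4 * r + 4" "j < 4 * r + 4" "i \<noteq> j"
  then show "G'_r_coupling (G'_r_class r i) (G'_r_class r j) = (if adj (G'_r r) i j then -1 else 0)"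
    unfolding adj_G'_r G'_r_coupling_def by simp
qed (rule degree_G'_r)

lemma char_poly_laplacian_G'_r:
  "char_poly (laplacian (G'_r r)) = [:0, 1:] * [:- (4 * real r + 4), 1:] ^ 2 *
    [:- (2 * real r + 2), 1:] ^ (2 * r + 1) * [:- (2 * real r + 3), 1:] ^ (2 * r)"
proof -
  let ?d = "G'_r_twin_eigenvalue r" and ?B = G'_r_coupling
  let ?cl = "\<lambda>t. if t < 1 then 0 else if t < 2 * r + 3 then 1 else 2 :: nat"
  let ?cl' = "\<lambda>t. if t < 1 then 0 else if t < 2 then 1 else 2 :: nat"
  have "char_poly (laplacian (G'_r r)) = [:- (2 * real r + 3), 1:] ^ (2 * r) *
      char_poly (class_mat (2 * r + 4) ?cl ?d ?B (\<lambda>t. if t = 0 then 2 * r + 1 else 1))"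
    unfolding laplacian_G'_r
    by (rule char_poly_class_mat_collapse[where a = 0]) (auto simp: G'_r_class_def G'_r_twin_eigenvalue_def)
  also have "char_poly (class_mat (2 * r + 4) ?cl ?d ?B (\<lambda>t. if t = 0 then 2 * r + 1 else 1)) =
      [:- (2 * real r + 2), 1:] ^ (2 * r + 1) *
      char_poly (class_mat 3 ?cl' ?d ?B (\<lambda>t. if t = 0 then 2 * r + 1 else if t = 1 then 2 * r + 2 else 1))"
    by (rule char_poly_class_mat_collapse[where a = 1]) (auto simp: G'_r_twin_eigenvalue_def)
  also have "char_poly (class_mat 3 ?cl' ?d ?B (\<lambda>t. if t = 0 then 2 * r + 1 else if t = 1 then 2 * r + 2 else 1)) =
      [:0, 1:] * [:- (4 * real r + 4), 1:] ^ 2"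
    unfolding poly_eq_poly_eq_iff[symmetric]
    by (rule ext) (simp add: poly_char_poly_3x3[OF class_mat_carrier] class_mat_index
        G'_r_twin_eigenvalue_def G'_r_coupling_def algebra_simps power2_eq_square)
  finally show ?thesis
    by (simp only: mult_ac)
qed

lemma avg_degree_G'_r: "avg_degree (G'_r r) = 2 * real r + 3 - 1 / (2 * real r + 2)"
proof -
  have "{(i, j). i < j \<and> j < gorder (G'_r r) \<and> adj (G'_r r) i j} =
      {..<2 * r + 1} \<times> {2 * r + 1..<4 * r + 4} \<union> {2 * r + 1..<4 * r + 3} \<times> {4 * r + 3}"
    unfolding gorder_G'_r adj_G'_r G'_r_class_def by auto
  moreover have "card ({..<2 * r + 1} \<times> {2 * r + 1..<4 * r + 4} \<union> {2 * r + 1..<4 * r + 3} \<times> {4 * r + 3}) =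
      (2 * r + 1) * (2 * r + 3) + (2 * r + 2)"
    by (subst card_Un_disjoint) (auto simp: card_cartesian_product)
  ultimately have "num_edges (G'_r r) = (2 * r + 1) * (2 * r + 3) + (2 * r + 2)"
    unfolding num_edges_def by simp
  then show ?thesis
    unfolding avg_degree_def gorder_G'_r by (simp add: field_simps)
qed

lemma lap_spectrum_G'_r:
  "lap_spectrum (G'_r r) = {#0, 4 * real r + 4, 4 * real r + 4#} +
    replicate_mset (2 * r + 1) (2 * real r + 2) + replicate_mset (2 * r) (2 * real r + 3)"
  unfolding lap_spectrum_def char_poly_laplacian_G'_r
  by (simp add: proots_mult proots_power del: mult_pCons_left mult_pCons_right) (simp add: ac_simps numeral_2_eq_2)

lemma lap_energy_G'_r: "lap_energy (G'_r r) = 8 * real r + 6"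
proof -
  define e where "e = 1 / (2 * real r + 2)"
  have "0 < e" "e \<le> 1"
    unfolding e_def by (auto simp: field_simps)
  have "lap_energy (G'_r r) = \<bar>- (2 * real r + 3 - e)\<bar> + 2 * \<bar>2 * real r + 1 + e\<bar>
      + (2 * real r + 1) * \<bar>e - 1\<bar> + 2 * real r * \<bar>e\<bar>"
    unfolding lap_energy_def lap_spectrum_G'_r avg_degree_G'_r e_def[symmetric] by (simp add: algebra_simps)
  also have "\<dots> = 8 * real r + 6"
    using \<open>0 < e\<close> \<open>e \<le> 1\<close> by (simp add: algebra_simps)
  finally show ?thesis .
qed

theorem theorem4:
  fixes r :: nat
  assumes "r \<ge> 1"
  shows "gorder (G_r r) = 4*r+4 \<and> gorder (G'_r r) = 4*r+4
    \<and> lap_energy (G_r r) = lap_energy (complete (4*r+4))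
    \<and> lap_energy (G'_r r) = lap_energy (complete (4*r+4))
    \<and> lap_energy (complete (4*r+4)) = 8*r+6
    \<and> L_borderenergetic (G_r r) \<and> L_borderenergetic (G'_r r)
    \<and> lap_spectrum (G_r r) \<noteq> lap_spectrum (complete (4*r+4))
    \<and> lap_spectrum (G'_r r) \<noteq> lap_spectrum (complete (4*r+4))"
proof -
  \<comment> \<open>The computation does not need \<open>r \<ge> 1\<close>; it is valid for \<open>r = 0\<close> as well.\<close>
  have "lap_energy (complete (4 * r + 4)) = 8 * real r + 6"
    using lap_energy_complete[of "4 * r + 4"] by simp
  moreover have "set_mset (lap_spectrum (complete (4 * r + 4))) = {0, 4 * real r + 4}"
    by (simp add: lap_spectrum_complete)
  moreover have "2 * real r + 1 \<in># lap_spectrum (G_r r)" "2 * real r + 2 \<in># lap_spectrum (G'_r r)"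
    by (simp_all add: lap_spectrum_G_r lap_spectrum_G'_r)
  ultimately show ?thesis
    using lap_energy_G_r lap_energy_G'_r gorder_G_r gorder_G'_r
    unfolding L_borderenergetic_def by auto
qed

end
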